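(* Let $A_1,\dots,A_m\in\mathbb{S}^n$ and $b\in\mathbb{R}^m$. If Assumption 1 holds for some $p$, then it holds for every $p'\le p$ such that $\mathcal{M}_{p'}$ is non-empty. Furthermore, if Assumption 1(a) holds for $p=n$, then it holds for every $p'$ such that $\mathcal{M}_{p'}$ is non-empty. In both cases, the associated dimension $m'$ is independent of $p$.
   Context: $\mathbb{S}^n$: real symmetric $n\times n$ matrices; $\langle U,V\rangle=\operatorname{tr}(U^\top V)$. For $p\ge1$, $\mathcal{M}_p=\{Y\in\mathbb{R}^{n\times p}:\langle A_i,YY^\top\rangle=b_i,\ i=1,\dots,m\}$. Assumption 1 (for a given $p$ with $\mathcal{M}_p\ne\emptyset$): either (a) $A_1Y,\dots,A_mY$ are linearly independent in $\mathbb{R}^{n\times p}$ for all $Y\in\mathcal{M}_p$, or (b) $\operatorname{span}\{A_1Y,\dots,A_mY\}$ has the same dimension for all $Y$ in an open neighborhood of $\mathcal{M}_p$ in $\mathbb{R}^{n\times p}$. In either case $m'$ denotes the dimension of $\operatorname{span}\{A_1Y,\dots,A_mY\}$ for $Y\in\mathcal{M}_p$. *)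

theory Defs
  imports "HOL-Analysis.Analysis" "HOL-Library.Function_Algebras"
begin

text \<open>Real matrices are represented as functions nat => nat => real; an n x p matrix
  is such a function vanishing outside the index range {..<n} x {..<p}.
  The matrix dimension p varies inside the statement, so type-indexed
  dimensions cannot be used.\<close>

type_synonym rmat = "nat \<Rightarrow> nat \<Rightarrow> real"

definition mats :: "nat \<Rightarrow> nat \<Rightarrow> rmat set" where
  "mats n p = {Y. \<forall>i j. (n \<le> i \<or> p \<le> j) \<longrightarrow> Y i j = 0}"

definition smat :: "real \<Rightarrow> rmat \<Rightarrow> rmat" where
  "smat c Y = (\<lambda>i j. c * Y i j)"

definition sym_mat :: "nat \<Rightarrow> rmat \<Rightarrow> bool" where
  "sym_mat n A \<longleftrightarrow> (\<forall>i<n. \<forall>j<n. A i j = A j i)"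

definition frob :: "nat \<Rightarrow> nat \<Rightarrow> rmat \<Rightarrow> rmat \<Rightarrow> real" where
  "frob r s U V = (\<Sum>i<r. \<Sum>j<s. U i j * V i j)"

definition gram :: "nat \<Rightarrow> nat \<Rightarrow> rmat \<Rightarrow> rmat" where
  "gram n p Y = (\<lambda>i j. if i < n \<and> j < n then (\<Sum>k<p. Y i k * Y j k) else 0)"

definition mprod :: "nat \<Rightarrow> nat \<Rightarrow> rmat \<Rightarrow> rmat \<Rightarrow> rmat" where
  "mprod n p A Y = (\<lambda>i k. if i < n \<and> k < p then (\<Sum>j<n. A i j * Y j k) else 0)"

definition Mset :: "nat \<Rightarrow> nat \<Rightarrow> (nat \<Rightarrow> rmat) \<Rightarrow> (nat \<Rightarrow> real) \<Rightarrow> nat \<Rightarrow> rmat set" where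
  "Mset n m A b p = {Y \<in> mats n p. \<forall>l<m. frob n n (A l) (gram n p Y) = b l}"

definition lin_indep_AY :: "nat \<Rightarrow> nat \<Rightarrow> (nat \<Rightarrow> rmat) \<Rightarrow> nat \<Rightarrow> rmat \<Rightarrow> bool" where
  "lin_indep_AY n m A p Y \<longleftrightarrow>
     (\<forall>c :: nat \<Rightarrow> real. (\<lambda>i k. \<Sum>l<m. c l * mprod n p (A l) Y i k) = (\<lambda>i k. 0)
        \<longrightarrow> (\<forall>l<m. c l = 0))"

definition dimAY :: "nat \<Rightarrow> nat \<Rightarrow> (nat \<Rightarrow> rmat) \<Rightarrow> nat \<Rightarrow> rmat \<Rightarrow> nat" where
  "dimAY n m A p Y = vector_space.dim smat ((\<lambda>l. mprod n p (A l) Y) ` {..<m})"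

definition mdist :: "nat \<Rightarrow> nat \<Rightarrow> rmat \<Rightarrow> rmat \<Rightarrow> real" where
  "mdist n p Y Z = sqrt (\<Sum>i<n. \<Sum>j<p. (Y i j - Z i j)^2)"

definition open_mats :: "nat \<Rightarrow> nat \<Rightarrow> rmat set \<Rightarrow> bool" where
  "open_mats n p U \<longleftrightarrow> U \<subseteq> mats n p \<and>
     (\<forall>Y\<in>U. \<exists>e>0. \<forall>Z\<in>mats n p. mdist n p Y Z < e \<longrightarrow> Z \<in> U)"

definition assm1a :: "nat \<Rightarrow> nat \<Rightarrow> (nat \<Rightarrow> rmat) \<Rightarrow> (nat \<Rightarrow> real) \<Rightarrow> nat \<Rightarrow> bool" where
  "assm1a n m A b p \<longleftrightarrow> (\<forall>Y\<in>Mset n m A b p. lin_indep_AY n m A p Y)"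

definition assm1b :: "nat \<Rightarrow> nat \<Rightarrow> (nat \<Rightarrow> rmat) \<Rightarrow> (nat \<Rightarrow> real) \<Rightarrow> nat \<Rightarrow> bool" where
  "assm1b n m A b p \<longleftrightarrow> (\<exists>U. open_mats n p U \<and> Mset n m A b p \<subseteq> U \<and>
      (\<exists>d. \<forall>Y\<in>U. dimAY n m A p Y = d))"

definition Assumption1 :: "nat \<Rightarrow> nat \<Rightarrow> (nat \<Rightarrow> rmat) \<Rightarrow> (nat \<Rightarrow> real) \<Rightarrow> nat \<Rightarrow> bool" where
  "Assumption1 n m A b p \<longleftrightarrow> Mset n m A b p \<noteq> {} \<and> (assm1a n m A b p \<or> assm1b n m A b p)"

end

(* Padding a matrix of M_p' with zero columns puts it in M_p (p' <= p) without changing A_l Y,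
   distances, or the dimension of span{A_l Y}; hence both forms of Assumption 1 pass from p to
   every smaller p'.  For larger q, Gram-Schmidt applied to the n rows of Y in M_q yields
   vectors u_1, ..., u_n in R^q with Z = Y U square and Z Z^T = Y Y^T, so Z lies in M_n; any
   relation sum_l c_l A_l Y = 0 multiplied by U on the right gives sum_l c_l A_l Z = 0, so
   independence at p = n gives independence at every q.  Finally m' is constant on each M_p,
   and M_p' is contained in M_p. *)

theory Submission
  imports Defs
begin

lemma sum_fun_apply: "(sum f S) x = (\<Sum>a\<in>S. f a x)"
  by (induction S rule: infinite_finite_induct) auto

interpretation mat_space: vector_space smat
  by unfold_locales (auto simp: smat_def fun_eq_iff algebra_simps)

lemma dimAY_lin_indep:
  assumes indep: "lin_indep_AY n m A p Y"
  shows "dimAY n m A p Y = m"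
proof -
  define v where "v = (\<lambda>l. mprod n p (A l) Y)"
  have coeffs_zero: "\<forall>l<m. c l = 0" if "(\<Sum>l<m. smat (c l) (v l)) = 0" for c
  proof -
    have "(\<lambda>i k. \<Sum>l<m. c l * mprod n p (A l) Y i k) = (\<lambda>i k. 0)"
      using fun_cong[OF fun_cong[OF that]] by (simp add: sum_fun_apply smat_def v_def)
    then show ?thesis
      using indep unfolding lin_indep_AY_def by blast
  qed
  have inj: "inj_on v {..<m}"
  proof (rule inj_onI, rule ccontr)
    fix a a' assume a: "a \<in> {..<m}" and a': "a' \<in> {..<m}" and "v a = v a'" "a \<noteq> a'"
    define c where "c = (\<lambda>l. if l = a then 1 else if l = a' then -1 else (0::real))"
    have "(\<Sum>l<m. smat (c l) (v l)) = (\<Sum>l\<in>{a, a'}. smat (c l) (v l))"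
      by (rule sum.mono_neutral_right) (use a a' in \<open>auto simp: c_def smat_def fun_eq_iff\<close>)
    also have "\<dots> = 0"
      using \<open>v a = v a'\<close> \<open>a \<noteq> a'\<close> by (simp add: c_def smat_def fun_eq_iff)
    finally have "c a = 0"
      using coeffs_zero a by blast
    then show False by (simp add: c_def)
  qed
  have "mat_space.independent (v ` {..<m})"
  proof (rule mat_space.independent_if_scalars_zero)
    fix u w assume "(\<Sum>x\<in>v ` {..<m}. smat (u x) x) = 0" and "w \<in> v ` {..<m}"
    then show "u w = 0"
      using coeffs_zero[of "u \<circ> v"] by (auto simp: sum.reindex[OF inj])
  qed simp
  then have "dimAY n m A p Y = card (v ` {..<m})"
    by (simp add: dimAY_def v_def mat_space.dim_eq_card_independent)
  also have "\<dots> = m"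
    by (simp add: card_image[OF inj])
  finally show ?thesis .
qed

section \<open>Padding with zero columns\<close>

lemma mats_mono: "p' \<le> p \<Longrightarrow> mats n p' \<subseteq> mats n p"
  unfolding mats_def by auto

lemma sum_lessThan_widen:
  fixes f :: "nat \<Rightarrow> 'a::comm_monoid_add"
  assumes "p' \<le> p" "\<And>k. p' \<le> k \<Longrightarrow> f k = 0"
  shows "(\<Sum>k<p. f k) = (\<Sum>k<p'. f k)"
  by (rule sum.mono_neutral_right) (use assms in auto)

lemma gram_widen:
  assumes "Y \<in> mats n p'" and "p' \<le> p"
  shows "gram n p Y = gram n p' Y"
proof -
  have "(\<Sum>k<p. Y i k * Y j k) = (\<Sum>k<p'. Y i k * Y j k)" for i j
    by (rule sum_lessThan_widen) (use assms in \<open>auto simp: mats_def\<close>)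
  then show ?thesis
    unfolding gram_def by (simp only:)
qed

lemma mprod_widen: "Y \<in> mats n p' \<Longrightarrow> p' \<le> p \<Longrightarrow> mprod n p B Y = mprod n p' B Y"
  unfolding mprod_def mats_def by (intro ext) auto

lemma mdist_widen:
  assumes "Y \<in> mats n p'" and "Z \<in> mats n p'" and "p' \<le> p"
  shows "mdist n p Y Z = mdist n p' Y Z"
proof -
  have "(\<Sum>j<p. (Y i j - Z i j)\<^sup>2) = (\<Sum>j<p'. (Y i j - Z i j)\<^sup>2)" for i
    by (rule sum_lessThan_widen) (use assms in \<open>auto simp: mats_def\<close>)
  then show ?thesis
    unfolding mdist_def by simp
qed

lemma lin_indep_AY_widen:
  assumes "Y \<in> mats n p'" and "p' \<le> p"
  shows "lin_indep_AY n m A p Y = lin_indep_AY n m A p' Y"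
  unfolding lin_indep_AY_def by (simp only: mprod_widen[OF assms])

lemma dimAY_widen:
  assumes "Y \<in> mats n p'" and "p' \<le> p"
  shows "dimAY n m A p Y = dimAY n m A p' Y"
  unfolding dimAY_def by (simp only: mprod_widen[OF assms])

lemma Mset_subset_mats: "Mset n m A b p \<subseteq> mats n p"
  unfolding Mset_def by auto

lemma Mset_mono:
  assumes "p' \<le> p"
  shows "Mset n m A b p' \<subseteq> Mset n m A b p"
proof
  fix Y assume "Y \<in> Mset n m A b p'"
  then have "Y \<in> mats n p'" and "\<forall>l<m. frob n n (A l) (gram n p' Y) = b l"
    by (auto simp: Mset_def)
  then show "Y \<in> Mset n m A b p"
    using mats_mono[OF assms] gram_widen[OF _ assms] by (auto simp: Mset_def)
qed

lemma open_mats_restrict: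
  assumes U: "open_mats n p U" and "p' \<le> p"
  shows "open_mats n p' (U \<inter> mats n p')"
  unfolding open_mats_def
proof (intro conjI ballI)
  fix Y assume Y: "Y \<in> U \<inter> mats n p'"
  then obtain e where "e > 0" and e: "\<forall>Z\<in>mats n p. mdist n p Y Z < e \<longrightarrow> Z \<in> U"
    using U by (auto simp: open_mats_def)
  have "Z \<in> U \<inter> mats n p'" if Z: "Z \<in> mats n p'" and "mdist n p' Y Z < e" for Z
  proof -
    have "mdist n p Y Z < e"
      using mdist_widen[OF _ Z \<open>p' \<le> p\<close>] Y that by simp
    then show ?thesis
      using e Z mats_mono[OF \<open>p' \<le> p\<close>] by blast
  qed
  with \<open>e > 0\<close> show "\<exists>e>0. \<forall>Z\<in>mats n p'. mdist n p' Y Z < e \<longrightarrow> Z \<in> U \<inter> mats n p'"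
    by blast
qed simp

lemma assm1a_downward:
  assumes "assm1a n m A b p" and "p' \<le> p"
  shows "assm1a n m A b p'"
  unfolding assm1a_def
proof
  fix Y assume Y: "Y \<in> Mset n m A b p'"
  then have "Y \<in> Mset n m A b p"
    using Mset_mono[OF \<open>p' \<le> p\<close>] by blast
  then have "lin_indep_AY n m A p Y"
    using assms(1) by (simp add: assm1a_def)
  moreover have "Y \<in> mats n p'"
    using Y Mset_subset_mats by blast
  ultimately show "lin_indep_AY n m A p' Y"
    using lin_indep_AY_widen[OF _ \<open>p' \<le> p\<close>] by simp
qed

lemma assm1b_downward:
  assumes "assm1b n m A b p" and "p' \<le> p"
  shows "assm1b n m A b p'"
proof -
  obtain U d where U: "open_mats n p U" and "Mset n m A b p \<subseteq> U"
    and d: "\<forall>Y\<in>U. dimAY n m A p Y = d"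
    using assms(1) by (auto simp: assm1b_def)
  then have "Mset n m A b p' \<subseteq> U \<inter> mats n p'"
    using Mset_mono[OF \<open>p' \<le> p\<close>] Mset_subset_mats by blast
  moreover have "dimAY n m A p' Y = d" if Y: "Y \<in> U \<inter> mats n p'" for Y
  proof -
    have "dimAY n m A p' Y = dimAY n m A p Y"
      by (rule dimAY_widen[symmetric]) (use Y \<open>p' \<le> p\<close> in auto)
    also have "\<dots> = d"
      using d Y by blast
    finally show ?thesis .
  qed
  ultimately show ?thesis
    using open_mats_restrict[OF U \<open>p' \<le> p\<close>] unfolding assm1b_def
    by (intro exI[of _ "U \<inter> mats n p'"] conjI exI[of _ d] ballI) auto
qed

lemma Assumption1_downward:
  "Assumption1 n m A b p \<Longrightarrow> p' \<le> p \<Longrightarrow> Mset n m A b p' \<noteq> {} \<Longrightarrow> Assumption1 n m A b p'"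
  unfolding Assumption1_def using assm1a_downward[of n m A b p p'] assm1b_downward[of n m A b p p']
  by blast

lemma Assumption1_dimAY_const:
  assumes "Assumption1 n m A b p"
  obtains d where "\<forall>Y\<in>Mset n m A b p. dimAY n m A p Y = d"
proof (cases "assm1a n m A b p")
  case True
  then have "\<forall>Y\<in>Mset n m A b p. dimAY n m A p Y = m"
    using dimAY_lin_indep by (simp add: assm1a_def)
  then show ?thesis
    by (rule that)
next
  case False
  then obtain U d where "Mset n m A b p \<subseteq> U" and "\<forall>Y\<in>U. dimAY n m A p Y = d"
    using assms by (auto simp: Assumption1_def assm1b_def)
  then show ?thesis
    using that by blast
qed

lemma Assumption1_dimAY_eq:
  assumes "Assumption1 n m A b p" "Assumption1 n m A b p'"
    and "Y \<in> Mset n m A b p" "Y' \<in> Mset n m A b p'"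
  shows "dimAY n m A p' Y' = dimAY n m A p Y"
proof -
  have ordered: "dimAY n m A q' Y' = dimAY n m A q Y"
    if "q' \<le> q" "Assumption1 n m A b q" "Y \<in> Mset n m A b q" "Y' \<in> Mset n m A b q'"
    for q q' Y Y'
  proof -
    obtain d where d: "\<forall>Y\<in>Mset n m A b q. dimAY n m A q Y = d"
      using Assumption1_dimAY_const[OF \<open>Assumption1 n m A b q\<close>] .
    have "Y' \<in> mats n q'"
      using Mset_subset_mats \<open>Y' \<in> Mset n m A b q'\<close> by blast
    then have "dimAY n m A q' Y' = dimAY n m A q Y'"
      by (rule dimAY_widen[OF _ \<open>q' \<le> q\<close>, symmetric])
    also have "\<dots> = d"
      using d Mset_mono[OF \<open>q' \<le> q\<close>] \<open>Y' \<in> Mset n m A b q'\<close> by blast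
    also have "\<dots> = dimAY n m A q Y"
      using d \<open>Y \<in> Mset n m A b q\<close> by simp
    finally show ?thesis .
  qed
  show ?thesis
  proof (cases "p' \<le> p")
    case True
    from ordered[OF True assms(1,3,4)] show ?thesis .
  next
    case False
    then have "p \<le> p'" by simp
    from ordered[OF this assms(2,4,3)] show ?thesis by simp
  qed
qed

section \<open>A square factor of a Gram matrix\<close>

definition dot :: "nat \<Rightarrow> (nat \<Rightarrow> real) \<Rightarrow> (nat \<Rightarrow> real) \<Rightarrow> real" where
  "dot q x y = (\<Sum>k<q. x k * y k)"

lemma dot_commute: "dot q x y = dot q y x"
  unfolding dot_def by (simp add: mult.commute)

lemma dot_sum_left: "dot q (\<lambda>k. \<Sum>l\<in>S. a l * f l k) y = (\<Sum>l\<in>S. a l * dot q (f l) y)"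
  unfolding dot_def by (simp add: sum_distrib_left sum_distrib_right mult.assoc sum.swap[of _ S])

lemma dot_add_left: "dot q (\<lambda>k. x k + z k) y = dot q x y + dot q z y"
  unfolding dot_def by (simp add: algebra_simps sum.distrib)

lemma dot_diff_left: "dot q (\<lambda>k. x k - z k) y = dot q x y - dot q z y"
  unfolding dot_def by (simp add: algebra_simps sum_subtractf)

lemma dot_div_right: "dot q x (\<lambda>k. y k / c) = dot q x y / c"
  unfolding dot_def by (simp add: sum_divide_distrib)

lemma dot_cong_left: "(\<And>k. k < q \<Longrightarrow> x k = x' k) \<Longrightarrow> dot q x y = dot q x' y"
  unfolding dot_def by simp

lemma dot_self_nonneg: "dot q x x \<ge> 0"
  unfolding dot_def by (auto intro: sum_nonneg)

lemma dot_self_eq_0: "dot q x x = 0 \<Longrightarrow> k < q \<Longrightarrow> x k = 0"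
  unfolding dot_def by (simp add: sum_nonneg_eq_0_iff)

text \<open>Both identities also hold for a null vector w, where the division yields 0.\<close>

lemma dot_div_dot_self_mult: "dot q x w / dot q w w * dot q w w = dot q x w"
proof (cases "dot q w w = 0")
  case True
  then have "\<And>k. k < q \<Longrightarrow> w k = 0"
    using dot_self_eq_0 by blast
  then have "dot q x w = 0"
    unfolding dot_def by simp
  then show ?thesis by simp
qed simp

lemma dot_self_div_dot_self_mult: "k < q \<Longrightarrow> dot q w w / dot q w w * w k = w k"
  using dot_self_eq_0 by (cases "dot q w w = 0") auto

lemma gram_schmidt_orthogonal:
  fixes r :: "nat \<Rightarrow> nat \<Rightarrow> real"
  shows "\<exists>w. (\<forall>l<i. \<forall>l'<i. l \<noteq> l' \<longrightarrow> dot q (w l) (w l') = 0) \<and>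
    (\<forall>j<i. \<forall>k<q. r j k = (\<Sum>l<i. dot q (r j) (w l) / dot q (w l) (w l) * w l k))"
proof (induction i)
  case (Suc i)
  then obtain w where orth: "\<forall>l<i. \<forall>l'<i. l \<noteq> l' \<longrightarrow> dot q (w l) (w l') = 0"
    and expand: "\<forall>j<i. \<forall>k<q. r j k = (\<Sum>l<i. dot q (r j) (w l) / dot q (w l) (w l) * w l k)"
    by blast
  define c where "c x l = dot q x (w l) / dot q (w l) (w l)" for x l
  define v where "v k = r i k - (\<Sum>l<i. c (r i) l * w l k)" for k
  have v_orth: "dot q (w l) v = 0" if "l < i" for l
  proof -
    have "(\<Sum>l'<i. c (r i) l' * dot q (w l') (w l)) = (\<Sum>l'<i. if l' = l then c (r i) l * dot q (w l) (w l) else 0)"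
      using orth \<open>l < i\<close> by (intro sum.cong) auto
    also have "\<dots> = c (r i) l * dot q (w l) (w l)"
      using \<open>l < i\<close> by simp
    also have "\<dots> = dot q (r i) (w l)"
      unfolding c_def by (rule dot_div_dot_self_mult)
    finally have "dot q v (w l) = 0"
      unfolding v_def dot_diff_left dot_sum_left by simp
    then show ?thesis
      by (simp add: dot_commute)
  qed
  have dot_r_v: "dot q (r j) v = (if j = i then dot q v v else 0)" if "j < Suc i" for j
  proof (cases "j = i")
    case True
    have "dot q (r i) v = dot q (\<lambda>k. v k + (\<Sum>l<i. c (r i) l * w l k)) v"
      by (simp add: v_def)
    also have "\<dots> = dot q v v + (\<Sum>l<i. c (r i) l * dot q (w l) v)"
      by (simp only: dot_add_left dot_sum_left)
    also have "\<dots> = dot q v v"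
      using v_orth by simp
    finally show ?thesis
      using True by simp
  next
    case False
    then have "j < i" using that by simp
    have "dot q (r j) v = dot q (\<lambda>k. \<Sum>l<i. c (r j) l * w l k) v"
      using expand \<open>j < i\<close> by (intro dot_cong_left) (simp add: c_def)
    also have "\<dots> = 0"
      unfolding dot_sum_left using v_orth by simp
    finally show ?thesis
      using False by simp
  qed
  show ?case
  proof (intro exI[of _ "w(i := v)"] conjI allI impI)
    fix l l' assume "l < Suc i" "l' < Suc i" "l \<noteq> l'"
    then show "dot q ((w(i := v)) l) ((w(i := v)) l') = 0"
      using orth v_orth by (auto simp: less_Suc_eq dot_commute)
  next
    fix j k assume "j < Suc i" "k < q"
    have "(\<Sum>l<Suc i. dot q (r j) ((w(i := v)) l) / dot q ((w(i := v)) l) ((w(i := v)) l) * (w(i := v)) l k)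
        = (\<Sum>l<i. c (r j) l * w l k) + dot q (r j) v / dot q v v * v k"
      by (simp add: c_def)
    also have "\<dots> = r j k"
    proof (cases "j = i")
      case True
      then have "dot q (r j) v = dot q v v"
        using dot_r_v[OF \<open>j < Suc i\<close>] by simp
      then have "dot q (r j) v / dot q v v * v k = v k"
        using dot_self_div_dot_self_mult[OF \<open>k < q\<close>] by (simp only:)
      then show ?thesis
        using True by (simp add: v_def)
    next
      case False
      then show ?thesis
        using dot_r_v \<open>j < Suc i\<close> \<open>k < q\<close> expand by (simp add: c_def)
    qed
    finally show "r j k = (\<Sum>l<Suc i. dot q (r j) ((w(i := v)) l) /
        dot q ((w(i := v)) l) ((w(i := v)) l) * (w(i := v)) l k)" ..
  qed
qed simp

lemma gram_schmidt_coordinates: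
  fixes r :: "nat \<Rightarrow> nat \<Rightarrow> real"
  obtains u where
    "\<And>i j. i < n \<Longrightarrow> j < n \<Longrightarrow> dot q (r i) (r j) = (\<Sum>t<n. dot q (r i) (u t) * dot q (r j) (u t))"
proof -
  obtain w where expand: "\<forall>j<n. \<forall>k<q. r j k = (\<Sum>t<n. dot q (r j) (w t) / dot q (w t) (w t) * w t k)"
    using gram_schmidt_orthogonal by blast
  define u where "u t = (\<lambda>k. w t k / sqrt (dot q (w t) (w t)))" for t
  have proj: "dot q x (u t) * dot q y (u t) = dot q y (w t) / dot q (w t) (w t) * dot q (w t) x"
    for x y t
  proof -
    have "sqrt (dot q (w t) (w t)) * sqrt (dot q (w t) (w t)) = dot q (w t) (w t)"
      using dot_self_nonneg by simp
    then show ?thesis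
      unfolding u_def dot_div_right dot_commute[of q "w t" x] by simp
  qed
  show ?thesis
  proof (rule that)
    fix i j assume "i < n" "j < n"
    have "dot q (r i) (r j) = dot q (r j) (r i)"
      by (rule dot_commute)
    also have "\<dots> = dot q (\<lambda>k. \<Sum>t<n. dot q (r j) (w t) / dot q (w t) (w t) * w t k) (r i)"
      using expand \<open>j < n\<close> by (intro dot_cong_left) auto
    also have "\<dots> = (\<Sum>t<n. dot q (r i) (u t) * dot q (r j) (u t))"
      unfolding dot_sum_left proj ..
    finally show "dot q (r i) (r j) = (\<Sum>t<n. dot q (r i) (u t) * dot q (r j) (u t))" .
  qed
qed

lemma gram_eq_gram_square:
  obtains Z u where "Z \<in> mats n n" and "gram n n Z = gram n q Y"
    and "\<And>i t. i < n \<Longrightarrow> t < n \<Longrightarrow> Z i t = dot q (Y i) (u t)"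
proof -
  obtain u where u:
    "\<And>i j. i < n \<Longrightarrow> j < n \<Longrightarrow> dot q (Y i) (Y j) = (\<Sum>t<n. dot q (Y i) (u t) * dot q (Y j) (u t))"
    using gram_schmidt_coordinates by blast
  define Z where "Z i t = (if i < n \<and> t < n then dot q (Y i) (u t) else 0)" for i t
  have "gram n n Z i j = gram n q Y i j" for i j
  proof (cases "i < n \<and> j < n")
    case True
    then have "gram n n Z i j = (\<Sum>t<n. dot q (Y i) (u t) * dot q (Y j) (u t))"
      by (simp add: gram_def Z_def)
    also have "\<dots> = dot q (Y i) (Y j)"
      using u True by simp
    also have "\<dots> = gram n q Y i j"
      using True by (simp add: gram_def dot_def)
    finally show ?thesis .
  qed (auto simp: gram_def)
  then have "gram n n Z = gram n q Y"
    by blast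
  moreover have "Z \<in> mats n n"
    by (simp add: Z_def mats_def)
  ultimately show ?thesis
    using that[of Z u] by (simp add: Z_def)
qed

lemma mprod_right_factor:
  assumes Z: "\<And>j t. j < n \<Longrightarrow> t < n \<Longrightarrow> Z j t = dot q (Y j) (u t)" and "i < n" "t < n"
  shows "mprod n n B Z i t = dot q (mprod n q B Y i) (u t)"
proof -
  have "mprod n n B Z i t = (\<Sum>j<n. B i j * dot q (Y j) (u t))"
    using assms by (simp add: mprod_def)
  also have "\<dots> = dot q (\<lambda>k. \<Sum>j<n. B i j * Y j k) (u t)"
    by (rule dot_sum_left[symmetric])
  also have "\<dots> = dot q (mprod n q B Y i) (u t)"
    using \<open>i < n\<close> by (intro dot_cong_left) (simp add: mprod_def)
  finally show ?thesis .
qed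

lemma lin_indep_AY_right_factor:
  assumes Z: "\<And>j t. j < n \<Longrightarrow> t < n \<Longrightarrow> Z j t = dot q (Y j) (u t)"
    and indep: "lin_indep_AY n m A n Z"
  shows "lin_indep_AY n m A q Y"
  unfolding lin_indep_AY_def
proof (rule allI, rule impI)
  fix c :: "nat \<Rightarrow> real"
  assume comb: "(\<lambda>i k. \<Sum>l<m. c l * mprod n q (A l) Y i k) = (\<lambda>i k. 0)"
  show "\<forall>l<m. c l = 0"
  proof -
  have "(\<Sum>l<m. c l * mprod n n (A l) Z i t) = 0" for i t
  proof (cases "i < n \<and> t < n")
    case True
    then have "(\<Sum>l<m. c l * mprod n n (A l) Z i t) = dot q (\<lambda>k. \<Sum>l<m. c l * mprod n q (A l) Y i k) (u t)"
      by (simp add: mprod_right_factor[OF Z] dot_sum_left)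
    also have "\<dots> = 0"
      using comb by (simp add: dot_def fun_eq_iff)
    finally show ?thesis .
  qed (auto simp: mprod_def)
  then have "(\<lambda>i t. \<Sum>l<m. c l * mprod n n (A l) Z i t) = (\<lambda>i t. 0)"
    by blast
  then show "\<forall>l<m. c l = 0"
    using indep unfolding lin_indep_AY_def by blast
  qed
qed

lemma assm1a_from_square:
  assumes "assm1a n m A b n"
  shows "assm1a n m A b q"
  unfolding assm1a_def
proof
  fix Y assume Y: "Y \<in> Mset n m A b q"
  obtain Z u where "Z \<in> mats n n" and "gram n n Z = gram n q Y"
    and Z: "\<And>i t. i < n \<Longrightarrow> t < n \<Longrightarrow> Z i t = dot q (Y i) (u t)"
    using gram_eq_gram_square by blast
  then have "Z \<in> Mset n m A b n"
    using Y by (simp add: Mset_def)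
  then have "lin_indep_AY n m A n Z"
    using assms by (simp add: assm1a_def)
  with Z show "lin_indep_AY n m A q Y"
    by (rule lin_indep_AY_right_factor)
qed

theorem proposition2:
  fixes n m :: nat and A :: "nat \<Rightarrow> rmat" and b :: "nat \<Rightarrow> real"
  assumes symA: "\<forall>l<m. sym_mat n (A l)"
  shows
    "(\<forall>p\<ge>1. Assumption1 n m A b p \<longrightarrow>
        (\<forall>p'. 1 \<le> p' \<and> p' \<le> p \<and> Mset n m A b p' \<noteq> {} \<longrightarrow>
           Assumption1 n m A b p' \<and>
           (\<forall>Y\<in>Mset n m A b p. \<forall>Y'\<in>Mset n m A b p'. dimAY n m A p' Y' = dimAY n m A p Y)))
     \<and>
     ((1 \<le> n \<and> Mset n m A b n \<noteq> {} \<and> assm1a n m A b n) \<longrightarrow>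
        (\<forall>p'. 1 \<le> p' \<and> Mset n m A b p' \<noteq> {} \<longrightarrow>
           Assumption1 n m A b p' \<and>
           (\<forall>Y\<in>Mset n m A b n. \<forall>Y'\<in>Mset n m A b p'. dimAY n m A p' Y' = dimAY n m A n Y)))"
proof (rule conjI; intro allI impI)
  fix p p'
  assume A1: "Assumption1 n m A b p" and p': "1 \<le> p' \<and> p' \<le> p \<and> Mset n m A b p' \<noteq> {}"
  then have A1': "Assumption1 n m A b p'"
    using Assumption1_downward[OF A1] by blast
  then show "Assumption1 n m A b p' \<and>
      (\<forall>Y\<in>Mset n m A b p. \<forall>Y'\<in>Mset n m A b p'. dimAY n m A p' Y' = dimAY n m A p Y)"
    using Assumption1_dimAY_eq[OF A1 A1'] by blast
next
  fix p'
  assume square: "1 \<le> n \<and> Mset n m A b n \<noteq> {} \<and> assm1a n m A b n"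
    and p': "1 \<le> p' \<and> Mset n m A b p' \<noteq> {}"
  then have A1: "Assumption1 n m A b n"
    by (simp add: Assumption1_def)
  have A1': "Assumption1 n m A b p'"
    using square p' assm1a_from_square by (simp add: Assumption1_def)
  then show "Assumption1 n m A b p' \<and>
      (\<forall>Y\<in>Mset n m A b n. \<forall>Y'\<in>Mset n m A b p'. dimAY n m A p' Y' = dimAY n m A n Y)"
    using Assumption1_dimAY_eq[OF A1 A1'] by blast
qed

end
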